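(* Let $k$ be a nonnegative integer or half an integer and suppose $F_k$ is a holomorphic function on $\mathfrak H$ satisfying $F_k''-\frac{k+1}6E_2F_k'+\frac{k(k+1)}{12}E_2'F_k=0$. Then $$\partial_{k+6}([F_k,E_4])=\frac{k-4}{18}[F_k,E_6]\quad\text{and}\quad \partial_{k+8}([F_k,E_6])=\frac{k-6}{8}E_4[F_k,E_4],$$ where in the brackets $F_k$ is regarded as of weight $k$.
   Context: $\tau\in\mathfrak H$, $q=e^{2\pi i\tau}$, ${}'=\frac1{2\pi i}\frac d{d\tau}$. $E_2=1-24\sum_{n\ge1}\sigma_1(n)q^n$, $E_4=1+240\sum\sigma_3(n)q^n$, $E_6=1-504\sum\sigma_5(n)q^n$, $\sigma_m(n)=\sum_{d\mid n}d^m$. For a parameter $w$, $\partial_w(f)=f'-\frac{w}{12}E_2f$. Rankin–Cohen bracket: for $f$ of weight $a$ and $g$ of weight $b$, $[f,g]=afg'-bf'g$ (so $[F_k,E_4]$ has weight $k+6$, $[F_k,E_6]$ weight $k+8$); $E_4,E_6$ have weights $4,6$. *)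

theory Defs
  imports "HOL-Complex_Analysis.Complex_Analysis"
begin

definition upper_half_plane :: "complex set" where
  "upper_half_plane = {z. Im z > 0}"

definition qnome :: "complex \<Rightarrow> complex" where
  "qnome \<tau> = exp (2 * of_real pi * \<i> * \<tau>)"

definition divsigma :: "nat \<Rightarrow> nat \<Rightarrow> nat" where
  "divsigma m n = (\<Sum>d\<in>{d. d dvd n}. d ^ m)"

definition eis_series :: "nat \<Rightarrow> complex \<Rightarrow> complex" where
  "eis_series m \<tau> = (\<Sum>n. of_nat (divsigma m (Suc n)) * qnome \<tau> ^ Suc n)"

definition E2 :: "complex \<Rightarrow> complex" where
  "E2 \<tau> = 1 - 24 * eis_series 1 \<tau>"

definition E4 :: "complex \<Rightarrow> complex" where
  "E4 \<tau> = 1 + 240 * eis_series 3 \<tau>"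

definition E6 :: "complex \<Rightarrow> complex" where
  "E6 \<tau> = 1 - 504 * eis_series 5 \<tau>"

text \<open>The normalized derivative f' = (1/(2 pi i)) df/dtau.\<close>
definition qderiv :: "(complex \<Rightarrow> complex) \<Rightarrow> complex \<Rightarrow> complex" where
  "qderiv f \<tau> = deriv f \<tau> / (2 * of_real pi * \<i>)"

definition serre_deriv :: "complex \<Rightarrow> (complex \<Rightarrow> complex) \<Rightarrow> complex \<Rightarrow> complex" where
  "serre_deriv w f \<tau> = qderiv f \<tau> - w / 12 * E2 \<tau> * f \<tau>"

definition rc_bracket :: "complex \<Rightarrow> complex \<Rightarrow> (complex \<Rightarrow> complex) \<Rightarrow> (complex \<Rightarrow> complex) \<Rightarrow> complex \<Rightarrow> complex" where
  "rc_bracket a b f g \<tau> = a * f \<tau> * qderiv g \<tau> - b * qderiv f \<tau> * g \<tau>"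

end

(*
  Ramanujan's differential equations
    E2' = (E2^2 - E4) / 12,   E4' = (E2 E4 - E6) / 3,   E6' = (E2 E6 - E4^2) / 2,
  together with the differential equation of F, which eliminates F'', turn both identities
  into polynomial identities in E2, E4, E6, F and F'.

  Ramanujan's equations are identities between q-series. Comparing coefficients, they amount
  to the classical evaluations of the convolution sums sum_{m<N} sigma_i(m) sigma_j(N - m)
  for (i, j) = (1, 1), (1, 3), (3, 3), (1, 5), which follow from Liouville's identity: if
  P(u - v, v) = P(u, v - u), then in the sum of P(x, y) - P(x, y - x) over the solutions of
  a x + b y = N in positive integers, the shears (a, b, x, y) -> (a + b, b, x, y - x) and
  (a, b, x, y) -> (a, a + b, x - y, y) cancel everything except the terms with a = b or x = y,
  and these are divisor sums. The polynomials (u^2 + u v + v^2)^j and u^2 v^2 (u + v)^2 give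
  the four convolution sums.
*)

theory Submission
  imports Defs "HOL-Analysis.FPS_Convergence"
begin

section \<open>Liouville's identity\<close>

lemma sum_split_linorder:
  fixes r s :: "'b \<Rightarrow> 'c::linorder"
  assumes "finite A"
  shows "sum f A
       = sum f {v\<in>A. r v < s v} + sum f {v\<in>A. s v < r v} + sum f {v\<in>A. r v = s v}"
proof -
  have "A = {v\<in>A. r v < s v} \<union> {v\<in>A. s v < r v} \<union> {v\<in>A. r v = s v}"
    by auto
  also have "sum f \<dots>
      = sum f {v\<in>A. r v < s v} + sum f {v\<in>A. s v < r v} + sum f {v\<in>A. r v = s v}"
    using assms by (subst sum.union_disjoint; auto)+
  finally show ?thesis .
qed

definition axby_reps :: "nat \<Rightarrow> (nat \<times> nat \<times> nat \<times> nat) set" where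
  "axby_reps N = {(a, b, x, y). 0 < a \<and> 0 < b \<and> 0 < x \<and> 0 < y \<and> a * x + b * y = N}"

lemma finite_axby_reps: "finite (axby_reps N)"
proof (rule finite_subset)
  show "axby_reps N \<subseteq> {..N} \<times> {..N} \<times> {..N} \<times> {..N}"
    by (auto simp: axby_reps_def trans_le_add1 trans_le_add2)
qed simp

lemma sum_axby_reps_shear:
  fixes P :: "int \<Rightarrow> int \<Rightarrow> 'a::ab_group_add"
  assumes P_shear: "\<And>u v. P (u - v) v = P u (v - u)"
  shows "(\<Sum>(a, b, x, y)\<in>axby_reps N. P (int x) (int y) - P (int x) (int y - int x))
       = (\<Sum>(a, b, x, y)\<in>{(a, b, x, y)\<in>axby_reps N. a = b}. P (int x) (int y))
         - (\<Sum>(a, b, x, y)\<in>{(a, b, x, y)\<in>axby_reps N. x = y}. P (int x) 0)"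
proof -
  let ?T = "axby_reps N"
  have fin: "finite ?T" by (rule finite_axby_reps)
  have x_lt_y: "(\<Sum>(a, b, x, y)\<in>{(a, b, x, y)\<in>?T. x < y}. P (int x) (int y - int x))
              = (\<Sum>(a, b, x, y)\<in>{(a, b, x, y)\<in>?T. b < a}. P (int x) (int y))"
    by (rule sum.reindex_bij_witness[of _ "\<lambda>(a, b, x, y). (a - b, b, x, x + y)"
                                           "\<lambda>(a, b, x, y). (a + b, b, x, y - x)"])
       (auto simp: axby_reps_def algebra_simps diff_mult_distrib diff_mult_distrib2 of_nat_diff
                   trans_le_add1)
  have y_lt_x: "(\<Sum>(a, b, x, y)\<in>{(a, b, x, y)\<in>?T. y < x}. P (int x) (int y - int x))
              = (\<Sum>(a, b, x, y)\<in>{(a, b, x, y)\<in>?T. a < b}. P (int x) (int y))"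
    by (rule sum.reindex_bij_witness[of _ "\<lambda>(a, b, x, y). (a, b - a, x + y, y)"
                                           "\<lambda>(a, b, x, y). (a, a + b, x - y, y)"])
       (auto simp: axby_reps_def algebra_simps diff_mult_distrib diff_mult_distrib2 of_nat_diff
                   trans_le_add1 simp flip: P_shear)
  show ?thesis
    using sum_split_linorder[OF fin, of "\<lambda>(a, b, x, y). P (int x) (int y)"
                                        "\<lambda>(a, b, x, y). a" "\<lambda>(a, b, x, y). b"]
      sum_split_linorder[OF fin, of "\<lambda>(a, b, x, y). P (int x) (int y - int x)"
                                    "\<lambda>(a, b, x, y). x" "\<lambda>(a, b, x, y). y"]
      x_lt_y y_lt_x
    by (simp add: sum_subtractf split_def)
qed

lemma sum_axby_reps_a_eq_b:
  assumes "N > 0"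
  shows "(\<Sum>(a, b, x, y)\<in>{(a, b, x, y)\<in>axby_reps N. a = b}. f x y)
       = (\<Sum>M | M dvd N. \<Sum>x = 1..<M. f x (M - x))"
proof -
  have "(\<Sum>(a, b, x, y)\<in>{(a, b, x, y)\<in>axby_reps N. a = b}. f x y)
      = (\<Sum>(M, x)\<in>(SIGMA M:{M. M dvd N}. {1..<M}). f x (M - x))"
    by (rule sum.reindex_bij_witness[of _ "\<lambda>(M, x). (N div M, N div M, x, M - x)"
                                           "\<lambda>(a, b, x, y). (x + y, x)"])
       (use assms in \<open>auto simp: axby_reps_def simp flip: add_mult_distrib2 elim!: dvdE\<close>)
  also have "\<dots> = (\<Sum>M | M dvd N. \<Sum>x = 1..<M. f x (M - x))"
    using assms by (subst sum.Sigma) auto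
  finally show ?thesis .
qed

lemma sum_axby_reps_x_eq_y:
  fixes f :: "nat \<Rightarrow> 'a::comm_ring_1"
  assumes "N > 0"
  shows "(\<Sum>(a, b, x, y)\<in>{(a, b, x, y)\<in>axby_reps N. x = y}. f x)
       = (\<Sum>d | d dvd N. (of_nat (N div d) - 1) * f d)"
proof -
  have "(\<Sum>(a, b, x, y)\<in>{(a, b, x, y)\<in>axby_reps N. x = y}. f x)
      = (\<Sum>(d, a)\<in>(SIGMA d:{d. d dvd N}. {1..<N div d}). f d)"
    by (rule sum.reindex_bij_witness[of _ "\<lambda>(d, a). (a, N div d - a, d, d)"
                                           "\<lambda>(a, b, x, y). (x, a)"])
       (use assms in \<open>auto simp: axby_reps_def simp flip: add_mult_distrib elim!: dvdE\<close>)
  also have "\<dots> = (\<Sum>d | d dvd N. of_nat (card {1..<N div d}) * f d)"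
    using assms by (subst sum.Sigma[symmetric]) auto
  also have "\<dots> = (\<Sum>d | d dvd N. (of_nat (N div d) - 1) * f d)"
    using assms by (intro sum.cong) (auto simp: of_nat_diff Suc_le_eq elim!: dvdE)
  finally show ?thesis .
qed

lemma liouville_identity:
  fixes P :: "int \<Rightarrow> int \<Rightarrow> 'a::comm_ring_1"
  assumes P_shear: "\<And>u v. P (u - v) v = P u (v - u)" and "N > 0"
  shows "(\<Sum>(a, b, x, y)\<in>axby_reps N. P (int x) (int y) - P (int x) (int y - int x))
       = (\<Sum>M | M dvd N. \<Sum>x = 1..<M. P (int x) (int M - int x))
         - (\<Sum>d | d dvd N. (of_nat (N div d) - 1) * P (int d) 0)"
proof -
  have "(\<Sum>M | M dvd N. \<Sum>x = 1..<M. P (int x) (int (M - x)))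
      = (\<Sum>M | M dvd N. \<Sum>x = 1..<M. P (int x) (int M - int x))"
    by (intro sum.cong refl) (simp add: of_nat_diff)
  then show ?thesis
    using sum_axby_reps_shear[of P N, OF P_shear]
      sum_axby_reps_a_eq_b[OF \<open>N > 0\<close>, of "\<lambda>x y. P (int x) (int y)"]
      sum_axby_reps_x_eq_y[OF \<open>N > 0\<close>, of "\<lambda>x. P (int x) 0"]
    by simp
qed

lemma liouville_identity_telescoped:
  fixes P Q :: "int \<Rightarrow> int \<Rightarrow> int"
  assumes P_shear: "\<And>u v. P (u - v) v = P u (v - u)"
    and Q_diff: "\<And>m k. Q m (k + 1) - Q m k = c * P k (m - k)"
    and "N > 0"
  shows "c * (\<Sum>(a, b, x, y)\<in>axby_reps N. P (int x) (int y) - P (int x) (int y - int x))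
       = (\<Sum>M | M dvd N. Q (int M) (int M) - Q (int M) 1)
         - c * (\<Sum>d | d dvd N. (int (N div d) - 1) * P (int d) 0)"
proof -
  have "c * (\<Sum>x = 1..<M. P (int x) (int M - int x)) = Q (int M) (int M) - Q (int M) 1"
    if "M > 0" for M
  proof -
    have "c * (\<Sum>x = 1..<M. P (int x) (int M - int x))
        = (\<Sum>x = 1..<M. Q (int M) (int (Suc x)) - Q (int M) (int x))"
      unfolding sum_distrib_left by (intro sum.cong refl) (simp add: Q_diff[symmetric] add.commute)
    also have "\<dots> = Q (int M) (int M) - Q (int M) 1"
      using that by (subst sum_Suc_diff') auto
    finally show ?thesis .
  qed
  then have "c * (\<Sum>M | M dvd N. \<Sum>x = 1..<M. P (int x) (int M - int x))
           = (\<Sum>M | M dvd N. Q (int M) (int M) - Q (int M) 1)"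
    by (subst sum_distrib_left, intro sum.cong refl)
       (use \<open>N > 0\<close> in \<open>auto intro: dvd_pos_nat\<close>)
  then show ?thesis
    by (simp add: liouville_identity[OF P_shear \<open>N > 0\<close>] right_diff_distrib)
qed

section \<open>Convolution sums of divisor functions\<close>

(* {d. d dvd 0} is infinite, so the sum defining divsigma k 0 is 0 by convention. *)
lemma divsigma_0 [simp]: "divsigma k 0 = 0"
  by (simp add: divsigma_def)

definition divisor_conv :: "nat \<Rightarrow> nat \<Rightarrow> nat \<Rightarrow> int" where
  "divisor_conv i j N = (\<Sum>m\<le>N. int (divsigma i m) * int (divsigma j (N - m)))"

lemma divisor_conv_0 [simp]: "divisor_conv i j 0 = 0"
  by (simp add: divisor_conv_def)

lemma divisor_conv_commute: "divisor_conv i j N = divisor_conv j i N"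
  unfolding divisor_conv_def
  by (rule sum.reindex_bij_witness[of _ "\<lambda>m. N - m" "\<lambda>m. N - m"]) auto

lemma sum_axby_reps_power:
  "(\<Sum>(a, b, x, y)\<in>axby_reps N. int x ^ i * int y ^ j) = divisor_conv i j N"
proof -
  have "(\<Sum>(a, b, x, y)\<in>axby_reps N. int x ^ i * int y ^ j)
      = (\<Sum>(m, x, y)\<in>(SIGMA m:{0<..<N}. {x. x dvd m} \<times> {y. y dvd N - m}).
           int x ^ i * int y ^ j)"
    by (rule sum.reindex_bij_witness[of _ "\<lambda>(m, x, y). (m div x, (N - m) div y, x, y)"
                                           "\<lambda>(a, b, x, y). (a * x, x, y)"])
       (auto simp: axby_reps_def dvd_imp_le dvd_div_eq_0_iff intro!: Nat.gr0I)
  also have "\<dots> = (\<Sum>m\<in>{0<..<N}. int (divsigma i m) * int (divsigma j (N - m)))"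
    by (subst sum.Sigma[symmetric]) (auto simp: divsigma_def sum_product sum.cartesian_product)
  also have "\<dots> = divisor_conv i j N"
    unfolding divisor_conv_def by (rule sum.mono_neutral_left) auto
  finally show ?thesis .
qed

lemma sum_divisors_cofactor_power:
  assumes "N > 0"
  shows "(\<Sum>d | d dvd N. (of_nat (N div d) - 1) * of_nat d ^ Suc k)
       = of_nat N * of_nat (divsigma k N) - (of_nat (divsigma (Suc k) N) :: 'a::comm_ring_1)"
proof -
  have "(\<Sum>d | d dvd N. (of_nat (N div d) - 1) * of_nat d ^ Suc k)
      = (\<Sum>d | d dvd N. of_nat N * of_nat d ^ k - (of_nat d ^ Suc k :: 'a))"
    by (intro sum.cong refl) (auto simp: algebra_simps elim!: dvdE)
  then show ?thesis
    by (simp add: divsigma_def sum_subtractf sum_distrib_left)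
qed

lemma divisor_conv_1_1:
  assumes "N > 0"
  shows "12 * divisor_conv 1 1 N
       = 5 * int (divsigma 3 N) + int (divsigma 1 N) - 6 * int N * int (divsigma 1 N)"
proof -
  define P :: "int \<Rightarrow> int \<Rightarrow> int" where "P u v = u ^ 2 + u * v + v ^ 2" for u v
  define Q :: "int \<Rightarrow> int \<Rightarrow> int" where
    "Q m k = 2*k^3 - 3*k^2*m - 3*k^2 + 6*k*m^2 + 3*k*m + k" for m k
  have shear: "P (u - v) v = P u (v - u)" for u v
    unfolding P_def by algebra
  have Q_diff: "Q m (k + 1) - Q m k = 6 * P k (m - k)" for m k
    unfolding P_def Q_def by algebra
  have "P u v - P u (v - u) = 2 * (u * v)" for u v
    unfolding P_def by algebra
  then have "(\<Sum>(a, b, x, y)\<in>axby_reps N. P (int x) (int y) - P (int x) (int y - int x))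
      = 2 * divisor_conv 1 1 N"
    using sum_axby_reps_power[of 1 1 N] by (simp add: case_prod_beta flip: sum_distrib_left)
  then have "6 * (2 * divisor_conv 1 1 N)
      = (\<Sum>M | M dvd N. Q (int M) (int M) - Q (int M) 1)
        - 6 * (\<Sum>d | d dvd N. (int (N div d) - 1) * P (int d) 0)"
    using liouville_identity_telescoped[OF shear Q_diff \<open>N > 0\<close>] by simp
  moreover have "Q m m - Q m 1 = 5 * m ^ 3 - 6 * m ^ 2 + m" for m
    unfolding Q_def by (simp; algebra)
  then have "(\<Sum>M | M dvd N. Q (int M) (int M) - Q (int M) 1)
      = 5 * int (divsigma 3 N) - 6 * int (divsigma 2 N) + int (divsigma 1 N)"
    by (simp add: divsigma_def sum.distrib sum_subtractf sum_distrib_left)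
  moreover have "(\<Sum>d | d dvd N. (int (N div d) - 1) * P (int d) 0)
      = int N * int (divsigma 1 N) - int (divsigma 2 N)"
    using sum_divisors_cofactor_power[OF \<open>N > 0\<close>, of 1] by (simp add: P_def numeral_2_eq_2)
  ultimately show ?thesis
    by linarith
qed

lemma divisor_conv_1_3:
  assumes "N > 0"
  shows "240 * divisor_conv 1 3 N = 21 * int (divsigma 5 N) + 10 * int (divsigma 3 N)
           - 30 * int N * int (divsigma 3 N) - int (divsigma 1 N)"
proof -
  define P :: "int \<Rightarrow> int \<Rightarrow> int" where "P u v = (u ^ 2 + u * v + v ^ 2) ^ 2" for u v
  define Q :: "int \<Rightarrow> int \<Rightarrow> int" where
    "Q m k = 6*k^5 - 15*k^4*m - 15*k^4 + 30*k^3*m^2 + 30*k^3*m + 10*k^3 - 30*k^2*m^3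
      - 45*k^2*m^2 - 15*k^2*m + 30*k*m^4 + 30*k*m^3 + 15*k*m^2 - k" for m k
  have shear: "P (u - v) v = P u (v - u)" for u v
    unfolding P_def by algebra
  have Q_diff: "Q m (k + 1) - Q m k = 30 * P k (m - k)" for m k
    unfolding P_def Q_def by algebra
  have "P u v - P u (v - u) = 4 * (u * v ^ 3) + 4 * (u ^ 3 * v)" for u v
    unfolding P_def by algebra
  then have "(\<Sum>(a, b, x, y)\<in>axby_reps N. P (int x) (int y) - P (int x) (int y - int x))
      = 8 * divisor_conv 1 3 N"
    using sum_axby_reps_power[of 1 3 N] sum_axby_reps_power[of 3 1 N]
      divisor_conv_commute[of 1 3 N]
    by (simp add: sum.distrib case_prod_beta flip: sum_distrib_left)
  then have "30 * (8 * divisor_conv 1 3 N)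
      = (\<Sum>M | M dvd N. Q (int M) (int M) - Q (int M) 1)
        - 30 * (\<Sum>d | d dvd N. (int (N div d) - 1) * P (int d) 0)"
    using liouville_identity_telescoped[OF shear Q_diff \<open>N > 0\<close>] by simp
  moreover have "Q m m - Q m 1 = 21 * m ^ 5 - 30 * m ^ 4 + 10 * m ^ 3 - m" for m
    unfolding Q_def by (simp; algebra)
  then have "(\<Sum>M | M dvd N. Q (int M) (int M) - Q (int M) 1)
      = 21 * int (divsigma 5 N) - 30 * int (divsigma 4 N) + 10 * int (divsigma 3 N)
        - int (divsigma 1 N)"
    by (simp add: divsigma_def sum.distrib sum_subtractf sum_distrib_left)
  moreover have "(\<Sum>d | d dvd N. (int (N div d) - 1) * P (int d) 0)
      = int N * int (divsigma 3 N) - int (divsigma 4 N)"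
    using sum_divisors_cofactor_power[OF \<open>N > 0\<close>, of 3] by (simp add: P_def flip: power_mult)
  ultimately show ?thesis
    by linarith
qed

lemma divisor_conv_3_3:
  assumes "N > 0"
  shows "120 * divisor_conv 3 3 N = int (divsigma 7 N) - int (divsigma 3 N)"
proof -
  define P :: "int \<Rightarrow> int \<Rightarrow> int" where "P u v = u ^ 2 * v ^ 2 * (u + v) ^ 2" for u v
  define Q :: "int \<Rightarrow> int \<Rightarrow> int" where
    "Q m k = 6*k^5*m^2 - 15*k^4*m^3 - 15*k^4*m^2 + 10*k^3*m^4 + 30*k^3*m^3 + 10*k^3*m^2
      - 15*k^2*m^4 - 15*k^2*m^3 + 5*k*m^4 - k*m^2" for m k
  have shear: "P (u - v) v = P u (v - u)" for u v
    unfolding P_def by algebra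
  have Q_diff: "Q m (k + 1) - Q m k = 30 * P k (m - k)" for m k
    unfolding P_def Q_def by algebra
  have "P u v - P u (v - u) = 4 * (u ^ 3 * v ^ 3)" for u v
    unfolding P_def by algebra
  then have "(\<Sum>(a, b, x, y)\<in>axby_reps N. P (int x) (int y) - P (int x) (int y - int x))
      = 4 * divisor_conv 3 3 N"
    using sum_axby_reps_power[of 3 3 N] by (simp add: case_prod_beta flip: sum_distrib_left)
  then have "30 * (4 * divisor_conv 3 3 N)
      = (\<Sum>M | M dvd N. Q (int M) (int M) - Q (int M) 1)
        - 30 * (\<Sum>d | d dvd N. (int (N div d) - 1) * P (int d) 0)"
    using liouville_identity_telescoped[OF shear Q_diff \<open>N > 0\<close>] by simp
  moreover have "Q m m - Q m 1 = m ^ 7 - m ^ 3" for m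
    unfolding Q_def by (simp; algebra)
  then have "(\<Sum>M | M dvd N. Q (int M) (int M) - Q (int M) 1)
      = int (divsigma 7 N) - int (divsigma 3 N)"
    by (simp add: divsigma_def sum_subtractf)
  moreover have "P d 0 = 0" for d
    by (simp add: P_def)
  ultimately show ?thesis
    by simp
qed

lemma divisor_conv_1_5:
  assumes "N > 0"
  shows "504 * divisor_conv 1 5 N = 20 * int (divsigma 7 N) + 21 * int (divsigma 5 N)
           + int (divsigma 1 N) - 42 * int N * int (divsigma 5 N)"
proof -
  define P :: "int \<Rightarrow> int \<Rightarrow> int" where "P u v = (u ^ 2 + u * v + v ^ 2) ^ 3" for u v
  define Q :: "int \<Rightarrow> int \<Rightarrow> int" where
    "Q m k = 60*k^7 - 210*k^6*m - 210*k^6 + 504*k^5*m^2 + 630*k^5*m + 210*k^5 - 735*k^4*m^3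
      - 1260*k^4*m^2 - 525*k^4*m + 840*k^3*m^4 + 1470*k^3*m^3 + 840*k^3*m^2 - 70*k^3
      - 630*k^2*m^5 - 1260*k^2*m^4 - 735*k^2*m^3 + 105*k^2*m + 420*k*m^6 + 630*k*m^5
      + 420*k*m^4 - 84*k*m^2 + 10*k" for m k
  have shear: "P (u - v) v = P u (v - u)" for u v
    unfolding P_def by algebra
  have Q_diff: "Q m (k + 1) - Q m k = 420 * P k (m - k)" for m k
    unfolding P_def Q_def by algebra
  have "P u v - P u (v - u) = 6 * (u * v^5) + 6 * (u^5 * v) + 14 * (u^3 * v^3)" for u v
    unfolding P_def by algebra
  then have "(\<Sum>(a, b, x, y)\<in>axby_reps N. P (int x) (int y) - P (int x) (int y - int x))
      = 12 * divisor_conv 1 5 N + 14 * divisor_conv 3 3 N"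
    using sum_axby_reps_power[of 1 5 N] sum_axby_reps_power[of 5 1 N]
      sum_axby_reps_power[of 3 3 N] divisor_conv_commute[of 1 5 N]
    by (simp add: sum.distrib case_prod_beta flip: sum_distrib_left)
  then have "420 * (12 * divisor_conv 1 5 N + 14 * divisor_conv 3 3 N)
      = (\<Sum>M | M dvd N. Q (int M) (int M) - Q (int M) 1)
        - 420 * (\<Sum>d | d dvd N. (int (N div d) - 1) * P (int d) 0)"
    using liouville_identity_telescoped[OF shear Q_diff \<open>N > 0\<close>] by simp
  moreover have "Q m m - Q m 1 = 249*m^7 - 420*m^6 + 210*m^5 - 49*m^3 + 10*m" for m
    unfolding Q_def by (simp; algebra)
  then have "(\<Sum>M | M dvd N. Q (int M) (int M) - Q (int M) 1)
      = 249 * int (divsigma 7 N) - 420 * int (divsigma 6 N) + 210 * int (divsigma 5 N)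
        - 49 * int (divsigma 3 N) + 10 * int (divsigma 1 N)"
    by (simp add: divsigma_def sum.distrib sum_subtractf sum_distrib_left)
  moreover have "(\<Sum>d | d dvd N. (int (N div d) - 1) * P (int d) 0)
      = int N * int (divsigma 5 N) - int (divsigma 6 N)"
    using sum_divisors_cofactor_power[OF \<open>N > 0\<close>, of 5] by (simp add: P_def flip: power_mult)
  ultimately show ?thesis
    using divisor_conv_3_3[OF \<open>N > 0\<close>] by (simp add: algebra_simps)
qed

section \<open>Ramanujan's differential equations\<close>

definition divisor_fps :: "nat \<Rightarrow> 'a::comm_ring_1 fps" where
  "divisor_fps k = Abs_fps (\<lambda>n. of_nat (divsigma k n))"

(* The Euler operator q d/dq; under q = qnome tau it becomes qderiv. *)
definition fps_theta :: "'a::comm_ring_1 fps \<Rightarrow> 'a fps" where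
  "fps_theta f = Abs_fps (\<lambda>n. of_nat n * fps_nth f n)"

definition E2_fps :: "'a::comm_ring_1 fps" where "E2_fps = 1 - 24 * divisor_fps 1"
definition E4_fps :: "'a::comm_ring_1 fps" where "E4_fps = 1 + 240 * divisor_fps 3"
definition E6_fps :: "'a::comm_ring_1 fps" where "E6_fps = 1 - 504 * divisor_fps 5"

lemma divisor_fps_nth [simp]: "fps_nth (divisor_fps k) n = of_nat (divsigma k n)"
  by (simp add: divisor_fps_def)

lemma fps_theta_nth [simp]: "fps_nth (fps_theta f) n = of_nat n * fps_nth f n"
  by (simp add: fps_theta_def)

lemma fps_theta_eq: "fps_theta f = fps_X * fps_deriv f"
  by (rule fps_ext) (auto simp: of_nat_diff)

lemma divisor_fps_mult_nth:
  "fps_nth (divisor_fps i * divisor_fps j :: 'a::comm_ring_1 fps) n = of_int (divisor_conv i j n)"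
  by (simp add: fps_mult_nth divisor_conv_def atLeast0AtMost)

lemma fps_theta_E2_fps: "12 * fps_theta E2_fps = (E2_fps ^ 2 - E4_fps :: 'a::comm_ring_1 fps)"
proof (rule fps_ext)
  fix n
  have "E2_fps ^ 2 - E4_fps
      = 576 * (divisor_fps 1 * divisor_fps 1) - 48 * divisor_fps 1 - (240 * divisor_fps 3 :: 'a fps)"
    by (simp add: E2_fps_def E4_fps_def power2_eq_square algebra_simps)
  moreover have "12 * int n * (- 24 * int (divsigma 1 n))
      = 576 * divisor_conv 1 1 n - 48 * int (divsigma 1 n) - 240 * int (divsigma 3 n)"
    using divisor_conv_1_1[of n] by (cases "n = 0") simp_all
  then have "(of_int (12 * int n * (- 24 * int (divsigma 1 n))) :: 'a)
      = of_int (576 * divisor_conv 1 1 n - 48 * int (divsigma 1 n) - 240 * int (divsigma 3 n))"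
    by (rule arg_cong)
  ultimately show "fps_nth (12 * fps_theta E2_fps) n
                 = fps_nth (E2_fps ^ 2 - E4_fps :: 'a fps) n"
    by (simp add: E2_fps_def divisor_fps_mult_nth numeral_fps_const)
qed

lemma fps_theta_E4_fps: "3 * fps_theta E4_fps = (E2_fps * E4_fps - E6_fps :: 'a::comm_ring_1 fps)"
proof (rule fps_ext)
  fix n
  have "E2_fps * E4_fps - E6_fps
      = 240 * divisor_fps 3 - 24 * divisor_fps 1 - 5760 * (divisor_fps 1 * divisor_fps 3)
        + (504 * divisor_fps 5 :: 'a fps)"
    by (simp add: E2_fps_def E4_fps_def E6_fps_def algebra_simps)
  moreover have "3 * int n * (240 * int (divsigma 3 n))
      = 240 * int (divsigma 3 n) - 24 * int (divsigma 1 n) - 5760 * divisor_conv 1 3 n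
        + 504 * int (divsigma 5 n)"
    using divisor_conv_1_3[of n] by (cases "n = 0") simp_all
  then have "(of_int (3 * int n * (240 * int (divsigma 3 n))) :: 'a)
      = of_int (240 * int (divsigma 3 n) - 24 * int (divsigma 1 n) - 5760 * divisor_conv 1 3 n
        + 504 * int (divsigma 5 n))"
    by (rule arg_cong)
  ultimately show "fps_nth (3 * fps_theta E4_fps) n
                 = fps_nth (E2_fps * E4_fps - E6_fps :: 'a fps) n"
    by (simp add: E4_fps_def divisor_fps_mult_nth numeral_fps_const)
qed

lemma fps_theta_E6_fps: "2 * fps_theta E6_fps = (E2_fps * E6_fps - E4_fps ^ 2 :: 'a::comm_ring_1 fps)"
proof (rule fps_ext)
  fix n
  have "E2_fps * E6_fps - E4_fps ^ 2
      = 12096 * (divisor_fps 1 * divisor_fps 5) - 57600 * (divisor_fps 3 * divisor_fps 3)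
        - 24 * divisor_fps 1 - 504 * divisor_fps 5 - (480 * divisor_fps 3 :: 'a fps)"
    by (simp add: E2_fps_def E4_fps_def E6_fps_def power2_eq_square algebra_simps)
  moreover have "2 * int n * (- 504 * int (divsigma 5 n))
      = 12096 * divisor_conv 1 5 n - 57600 * divisor_conv 3 3 n - 24 * int (divsigma 1 n)
        - 504 * int (divsigma 5 n) - 480 * int (divsigma 3 n)"
    using divisor_conv_1_5[of n] divisor_conv_3_3[of n] by (cases "n = 0") simp_all
  then have "(of_int (2 * int n * (- 504 * int (divsigma 5 n))) :: 'a)
      = of_int (12096 * divisor_conv 1 5 n - 57600 * divisor_conv 3 3 n - 24 * int (divsigma 1 n)
        - 504 * int (divsigma 5 n) - 480 * int (divsigma 3 n))"
    by (rule arg_cong)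
  ultimately show "fps_nth (2 * fps_theta E6_fps) n
                 = fps_nth (E2_fps * E6_fps - E4_fps ^ 2 :: 'a fps) n"
    by (simp add: E6_fps_def divisor_fps_mult_nth numeral_fps_const)
qed

lemma conv_radius_mono_norm:
  fixes f g :: "nat \<Rightarrow> 'a::{banach, real_normed_div_algebra}"
  assumes "\<And>n. norm (f n) \<le> norm (g n)"
  shows "conv_radius g \<le> conv_radius f"
proof (rule conv_radius_geI_ex')
  fix r :: real
  assume "0 < r" "ereal r < conv_radius g"
  then have "summable (\<lambda>n. norm (g n * of_real r ^ n))"
    by (intro abs_summable_in_conv_radius) simp
  moreover have "norm (norm (f n * of_real r ^ n)) \<le> norm (g n * of_real r ^ n)" for n
    by (simp add: norm_mult mult_right_mono assms)
  ultimately have "summable (\<lambda>n. norm (f n * of_real r ^ n))"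
    by (rule summable_comparison_test')
  then show "summable (\<lambda>n. f n * of_real r ^ n)"
    by (rule summable_norm_cancel)
qed

lemma conv_radius_of_nat_power:
  "conv_radius (\<lambda>n. of_nat n ^ k :: 'a::{banach, real_normed_field}) = 1"
proof (rule conv_radius_ratio_limit_nonzero[of _ 1])
  have "(\<lambda>n. (real n / real (Suc n)) ^ k) \<longlonglongrightarrow> 1"
    using tendsto_power[OF LIMSEQ_n_over_Suc_n, of k] by simp
  then show "(\<lambda>n. norm (of_nat n ^ k :: 'a) / norm (of_nat (Suc n) ^ k :: 'a)) \<longlonglongrightarrow> 1"
    by (simp only: norm_power norm_of_nat power_divide)
qed simp_all

lemma divsigma_le_power: "divsigma k n \<le> n ^ Suc k"
proof (cases "n = 0")
  case False
  have "{d. d dvd n} \<subseteq> {1..n}"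
    using False by (auto intro: dvd_imp_le Nat.gr0I)
  then have card_le: "card {d. d dvd n} \<le> n"
    using card_mono[of "{1..n}"] by simp
  have "divsigma k n \<le> card {d. d dvd n} * n ^ k"
    unfolding divsigma_def by (rule sum_bounded_above[where K = "n ^ k", simplified])
      (use False in \<open>auto intro: power_mono dvd_imp_le\<close>)
  also have "\<dots> \<le> n * n ^ k"
    using card_le by simp
  finally show ?thesis
    by simp
qed simp

lemma fps_conv_radius_divisor_fps:
  "1 \<le> fps_conv_radius (divisor_fps k :: 'a::{banach, real_normed_field} fps)"
proof -
  have "norm (of_nat (divsigma k n) :: 'a) \<le> norm (of_nat n ^ Suc k :: 'a)" for n
    unfolding norm_power norm_of_nat using divsigma_le_power[of k n]
    by (metis of_nat_le_iff of_nat_power)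
  then have "conv_radius (\<lambda>n. of_nat n ^ Suc k :: 'a)
           \<le> conv_radius (\<lambda>n. of_nat (divsigma k n) :: 'a)"
    by (rule conv_radius_mono_norm)
  then show ?thesis
    by (simp add: fps_conv_radius_def conv_radius_of_nat_power del: power_Suc)
qed

lemma fps_conv_radius_fps_theta:
  fixes f :: "'a::{banach, real_normed_field} fps"
  shows "fps_conv_radius f \<le> fps_conv_radius (fps_theta f)"
proof -
  have "fps_conv_radius f \<le> fps_conv_radius (fps_deriv f)"
    by (rule fps_conv_radius_deriv)
  also have "\<dots> \<le> fps_conv_radius (fps_X * fps_deriv f)"
    using fps_conv_radius_mult[of fps_X "fps_deriv f"] by simp
  finally show ?thesis
    by (simp add: fps_theta_eq)
qed

lemma one_le_fps_conv_radius_mult: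
  assumes "1 \<le> fps_conv_radius f" "1 \<le> fps_conv_radius g"
  shows "1 \<le> fps_conv_radius (f * g)"
  using assms fps_conv_radius_mult[of f g] by (simp add: min_def split: if_splits)

lemma one_le_fps_conv_radius_add:
  assumes "1 \<le> fps_conv_radius f" "1 \<le> fps_conv_radius g"
  shows "1 \<le> fps_conv_radius (f + g)"
  using assms fps_conv_radius_add[of f g] by (simp add: min_def split: if_splits)

lemma one_le_fps_conv_radius_diff:
  assumes "1 \<le> fps_conv_radius f" "1 \<le> fps_conv_radius g"
  shows "1 \<le> fps_conv_radius (f - g)"
  using assms fps_conv_radius_diff[of f g] by (simp add: min_def split: if_splits)

lemma fps_conv_radius_E_fps:
  "1 \<le> fps_conv_radius (E2_fps :: complex fps)"
  "1 \<le> fps_conv_radius (E4_fps :: complex fps)"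
  "1 \<le> fps_conv_radius (E6_fps :: complex fps)"
  unfolding E2_fps_def E4_fps_def E6_fps_def
  by (intro one_le_fps_conv_radius_add one_le_fps_conv_radius_diff one_le_fps_conv_radius_mult
        fps_conv_radius_divisor_fps; simp)+

lemma norm_qnome_less_one: "Im \<tau> > 0 \<Longrightarrow> norm (qnome \<tau>) < 1"
  by (simp add: qnome_def)

lemma norm_qnome_less_fps_conv_radius:
  assumes "Im \<tau> > 0" "1 \<le> fps_conv_radius f"
  shows "ereal (norm (qnome \<tau>)) < fps_conv_radius f"
proof -
  have "ereal (norm (qnome \<tau>)) < 1"
    using norm_qnome_less_one[OF assms(1)] by simp
  then show ?thesis
    using assms(2) by (rule less_le_trans)
qed

lemma qnome_has_field_derivative:
  "(qnome has_field_derivative 2 * of_real pi * \<i> * qnome \<tau>) (at \<tau>)"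
  unfolding qnome_def[abs_def] by (auto intro!: derivative_eq_intros)

lemma eval_fps_qnome_has_field_derivative:
  assumes "Im \<tau> > 0" "1 \<le> fps_conv_radius f"
  shows "((\<lambda>t. eval_fps f (qnome t)) has_field_derivative
           2 * of_real pi * \<i> * eval_fps (fps_theta f) (qnome \<tau>)) (at \<tau>)"
proof -
  have "1 \<le> fps_conv_radius (fps_deriv f)"
    using assms(2) fps_conv_radius_deriv[of f] by order
  then have "eval_fps (fps_theta f) (qnome \<tau>) = qnome \<tau> * eval_fps (fps_deriv f) (qnome \<tau>)"
    unfolding fps_theta_eq using assms(1)
    by (subst eval_fps_mult) (auto intro: norm_qnome_less_fps_conv_radius)
  moreover have "((\<lambda>t. eval_fps f (qnome t)) has_field_derivative
      eval_fps (fps_deriv f) (qnome \<tau>) * (2 * of_real pi * \<i> * qnome \<tau>)) (at \<tau>)"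
    using has_field_derivative_eval_fps[OF norm_qnome_less_fps_conv_radius[OF assms]]
    by (rule DERIV_chain2) (rule qnome_has_field_derivative)
  ultimately show ?thesis
    by (simp add: algebra_simps)
qed

lemma eis_series_eq_eval_fps:
  assumes "Im \<tau> > 0"
  shows "eis_series k \<tau> = eval_fps (divisor_fps k) (qnome \<tau>)"
proof -
  have "(\<lambda>n. fps_nth (divisor_fps k) n * qnome \<tau> ^ n)
          sums eval_fps (divisor_fps k) (qnome \<tau>)"
    by (intro sums_eval_fps norm_qnome_less_fps_conv_radius fps_conv_radius_divisor_fps assms)
  then have "(\<lambda>n. fps_nth (divisor_fps k) (Suc n) * qnome \<tau> ^ Suc n)
               sums eval_fps (divisor_fps k) (qnome \<tau>)"
    by (subst sums_Suc_iff) simp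
  then show ?thesis
    by (simp add: eis_series_def sums_iff)
qed

lemma open_upper_half_plane: "open upper_half_plane"
  unfolding upper_half_plane_def by (rule open_halfspace_Im_gt)

lemmas eval_fps_qnome_simps =
  eval_fps_add eval_fps_diff eval_fps_mult eval_fps_power norm_qnome_less_fps_conv_radius
  one_le_fps_conv_radius_add one_le_fps_conv_radius_diff one_le_fps_conv_radius_mult
  fps_conv_radius_divisor_fps fps_conv_radius_E_fps

lemma E_eq_eval_fps:
  assumes "\<tau> \<in> upper_half_plane"
  shows "E2 \<tau> = eval_fps E2_fps (qnome \<tau>)"
    and "E4 \<tau> = eval_fps E4_fps (qnome \<tau>)"
    and "E6 \<tau> = eval_fps E6_fps (qnome \<tau>)"
  using assms
  by (simp_all add: upper_half_plane_def E2_def E4_def E6_def E2_fps_def E4_fps_def E6_fps_def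
                    eis_series_eq_eval_fps eval_fps_qnome_simps)

lemma has_field_derivative_qnome_series:
  assumes "1 \<le> fps_conv_radius f"
    and "\<And>t. t \<in> upper_half_plane \<Longrightarrow> g t = eval_fps f (qnome t)"
    and "\<tau> \<in> upper_half_plane"
  shows "(g has_field_derivative 2 * of_real pi * \<i> * eval_fps (fps_theta f) (qnome \<tau>)) (at \<tau>)"
proof (rule has_field_derivative_transform_within_open[OF _ open_upper_half_plane assms(3)])
  show "((\<lambda>t. eval_fps f (qnome t)) has_field_derivative
          2 * of_real pi * \<i> * eval_fps (fps_theta f) (qnome \<tau>)) (at \<tau>)"
    using assms(1,3) by (intro eval_fps_qnome_has_field_derivative) (auto simp: upper_half_plane_def)
qed (use assms(2) in simp)

lemma eval_fps_qnome_fps_theta_E_fps: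
  assumes "\<tau> \<in> upper_half_plane"
  shows "eval_fps (fps_theta E2_fps) (qnome \<tau>) = (E2 \<tau> ^ 2 - E4 \<tau>) / 12"
    and "eval_fps (fps_theta E4_fps) (qnome \<tau>) = (E2 \<tau> * E4 \<tau> - E6 \<tau>) / 3"
    and "eval_fps (fps_theta E6_fps) (qnome \<tau>) = (E2 \<tau> * E6 \<tau> - E4 \<tau> ^ 2) / 2"
proof -
  have radius: "1 \<le> fps_conv_radius (fps_theta (E2_fps :: complex fps))"
     "1 \<le> fps_conv_radius (fps_theta (E4_fps :: complex fps))"
     "1 \<le> fps_conv_radius (fps_theta (E6_fps :: complex fps))"
    using fps_conv_radius_E_fps fps_conv_radius_fps_theta by (blast intro: order_trans)+
  have "Im \<tau> > 0"
    using assms by (simp add: upper_half_plane_def)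
  note eval = arg_cong[where f = "\<lambda>f. eval_fps f (qnome \<tau>)"]
  show "eval_fps (fps_theta E2_fps) (qnome \<tau>) = (E2 \<tau> ^ 2 - E4 \<tau>) / 12"
    using eval[OF fps_theta_E2_fps] radius \<open>Im \<tau> > 0\<close>
    by (simp add: E_eq_eval_fps[OF assms] eval_fps_qnome_simps power2_eq_square mult.commute)
  show "eval_fps (fps_theta E4_fps) (qnome \<tau>) = (E2 \<tau> * E4 \<tau> - E6 \<tau>) / 3"
    using eval[OF fps_theta_E4_fps] radius \<open>Im \<tau> > 0\<close>
    by (simp add: E_eq_eval_fps[OF assms] eval_fps_qnome_simps mult.commute)
  show "eval_fps (fps_theta E6_fps) (qnome \<tau>) = (E2 \<tau> * E6 \<tau> - E4 \<tau> ^ 2) / 2"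
    using eval[OF fps_theta_E6_fps] radius \<open>Im \<tau> > 0\<close>
    by (simp add: E_eq_eval_fps[OF assms] eval_fps_qnome_simps power2_eq_square mult.commute)
qed

lemma has_field_derivative_E2:
  assumes "\<tau> \<in> upper_half_plane"
  shows "(E2 has_field_derivative 2 * of_real pi * \<i> * ((E2 \<tau> ^ 2 - E4 \<tau>) / 12)) (at \<tau>)"
  using has_field_derivative_qnome_series[OF fps_conv_radius_E_fps(1) E_eq_eval_fps(1) assms]
  by (simp add: eval_fps_qnome_fps_theta_E_fps[OF assms])

lemma has_field_derivative_E4:
  assumes "\<tau> \<in> upper_half_plane"
  shows "(E4 has_field_derivative 2 * of_real pi * \<i> * ((E2 \<tau> * E4 \<tau> - E6 \<tau>) / 3)) (at \<tau>)"
  using has_field_derivative_qnome_series[OF fps_conv_radius_E_fps(2) E_eq_eval_fps(2) assms]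
  by (simp add: eval_fps_qnome_fps_theta_E_fps[OF assms])

lemma has_field_derivative_E6:
  assumes "\<tau> \<in> upper_half_plane"
  shows "(E6 has_field_derivative 2 * of_real pi * \<i> * ((E2 \<tau> * E6 \<tau> - E4 \<tau> ^ 2) / 2)) (at \<tau>)"
  using has_field_derivative_qnome_series[OF fps_conv_radius_E_fps(3) E_eq_eval_fps(3) assms]
  by (simp add: eval_fps_qnome_fps_theta_E_fps[OF assms])

lemma holomorphic_on_E:
  "E2 holomorphic_on upper_half_plane"
  "E4 holomorphic_on upper_half_plane"
  "E6 holomorphic_on upper_half_plane"
  using has_field_derivative_E2 has_field_derivative_E4 has_field_derivative_E6
  by (auto simp: holomorphic_on_open[OF open_upper_half_plane])

section \<open>Rankin-Cohen brackets\<close>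

lemma qderiv_eqI:
  "(f has_field_derivative 2 * of_real pi * \<i> * D) (at \<tau>) \<Longrightarrow> qderiv f \<tau> = D"
  by (simp add: qderiv_def DERIV_imp_deriv)

lemma has_field_derivative_qderiv:
  "f holomorphic_on S \<Longrightarrow> open S \<Longrightarrow> \<tau> \<in> S \<Longrightarrow>
     (f has_field_derivative 2 * of_real pi * \<i> * qderiv f \<tau>) (at \<tau>)"
  by (simp add: qderiv_def holomorphic_derivI)

lemma holomorphic_on_qderiv:
  "f holomorphic_on S \<Longrightarrow> open S \<Longrightarrow> qderiv f holomorphic_on S"
  unfolding qderiv_def[abs_def] by (intro holomorphic_intros holomorphic_deriv) simp_all

lemma qderiv_rc_bracket:
  assumes "f holomorphic_on S" "g holomorphic_on S" "open S" "\<tau> \<in> S"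
  shows "qderiv (rc_bracket a b f g) \<tau>
       = (a - b) * qderiv f \<tau> * qderiv g \<tau>
         + a * f \<tau> * qderiv (qderiv g) \<tau> - b * qderiv (qderiv f) \<tau> * g \<tau>"
proof (rule qderiv_eqI)
  note deriv = has_field_derivative_qderiv[OF _ \<open>open S\<close> \<open>\<tau> \<in> S\<close>]
  note holo = holomorphic_on_qderiv[OF _ \<open>open S\<close>]
  show "(rc_bracket a b f g has_field_derivative 2 * of_real pi * \<i> *
      ((a - b) * qderiv f \<tau> * qderiv g \<tau>
       + a * f \<tau> * qderiv (qderiv g) \<tau> - b * qderiv (qderiv f) \<tau> * g \<tau>)) (at \<tau>)"
    unfolding rc_bracket_def[abs_def]
    by (rule derivative_eq_intros deriv holo assms refl | simp add: algebra_simps)+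
qed

lemma qderiv_E:
  assumes "\<tau> \<in> upper_half_plane"
  shows "qderiv E2 \<tau> = (E2 \<tau> ^ 2 - E4 \<tau>) / 12"
    and "qderiv E4 \<tau> = (E2 \<tau> * E4 \<tau> - E6 \<tau>) / 3"
    and "qderiv E6 \<tau> = (E2 \<tau> * E6 \<tau> - E4 \<tau> ^ 2) / 2"
  using has_field_derivative_E2 has_field_derivative_E4 has_field_derivative_E6 assms
  by (blast intro: qderiv_eqI)+

lemma qderiv_qderiv_E:
  assumes "\<tau> \<in> upper_half_plane"
  shows "qderiv (qderiv E4) \<tau>
           = (qderiv E2 \<tau> * E4 \<tau> + E2 \<tau> * qderiv E4 \<tau> - qderiv E6 \<tau>) / 3" (is ?E4)
    and "qderiv (qderiv E6) \<tau>
           = (qderiv E2 \<tau> * E6 \<tau> + E2 \<tau> * qderiv E6 \<tau> - 2 * E4 \<tau> * qderiv E4 \<tau>) / 2" (is ?E6)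
proof -
  note deriv = has_field_derivative_E2[OF assms] has_field_derivative_E4[OF assms]
    has_field_derivative_E6[OF assms]
  note transform = has_field_derivative_transform_within_open[OF _ open_upper_half_plane assms]
  show ?E4
    by (rule qderiv_eqI, rule transform[where f = "\<lambda>t. (E2 t * E4 t - E6 t) / 3"])
       (auto intro!: derivative_eq_intros deriv simp: qderiv_E qderiv_E[OF assms] field_simps)
  show ?E6
    by (rule qderiv_eqI, rule transform[where f = "\<lambda>t. (E2 t * E6 t - E4 t ^ 2) / 2"])
       (auto intro!: derivative_eq_intros deriv simp: qderiv_E qderiv_E[OF assms] field_simps)
qed

(* d_i and dd_i stand for E_i' and E_i'', f1 and f2 for F' and F''. *)
lemma serre_bracket_identities_algebra:
  fixes k e2 e4 e6 d2 d4 d6 dd4 dd6 f f1 f2 :: complex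
  assumes "d2 = (e2 ^ 2 - e4) / 12" "d4 = (e2 * e4 - e6) / 3" "d6 = (e2 * e6 - e4 ^ 2) / 2"
    and "dd4 = (d2 * e4 + e2 * d4 - d6) / 3" "dd6 = (d2 * e6 + e2 * d6 - 2 * e4 * d4) / 2"
    and "f2 - (k + 1) / 6 * e2 * f1 + k * (k + 1) / 12 * d2 * f = 0"
  shows "(k - 4) * f1 * d4 + k * f * dd4 - 4 * f2 * e4 - (k + 6) / 12 * e2 * (k * f * d4 - 4 * f1 * e4)
           = (k - 4) / 18 * (k * f * d6 - 6 * f1 * e6)"
    and "(k - 6) * f1 * d6 + k * f * dd6 - 6 * f2 * e6 - (k + 8) / 12 * e2 * (k * f * d6 - 6 * f1 * e6)
           = (k - 6) / 8 * e4 * (k * f * d4 - 4 * f1 * e4)"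
proof -
  have f2: "f2 = (k + 1) / 6 * e2 * f1 - k * (k + 1) / 12 * d2 * f"
    using assms(6) by (simp add: algebra_simps)
  show "(k - 4) * f1 * d4 + k * f * dd4 - 4 * f2 * e4 - (k + 6) / 12 * e2 * (k * f * d4 - 4 * f1 * e4)
          = (k - 4) / 18 * (k * f * d6 - 6 * f1 * e6)"
    unfolding f2 assms(4,5) unfolding assms(1-3) by (simp add: field_simps) algebra
  show "(k - 6) * f1 * d6 + k * f * dd6 - 6 * f2 * e6 - (k + 8) / 12 * e2 * (k * f * d6 - 6 * f1 * e6)
          = (k - 6) / 8 * e4 * (k * f * d4 - 4 * f1 * e4)"
    unfolding f2 assms(4,5) unfolding assms(1-3) by (simp add: field_simps) algebra
qed

theorem mainTheorem5:
  fixes k :: real and F :: "complex \<Rightarrow> complex"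
  assumes "\<exists>n::nat. k = real n / 2"
    and "F holomorphic_on upper_half_plane"
    and "\<forall>\<tau>\<in>upper_half_plane.
           qderiv (qderiv F) \<tau> - of_real ((k + 1) / 6) * E2 \<tau> * qderiv F \<tau>
           + of_real (k * (k + 1) / 12) * qderiv E2 \<tau> * F \<tau> = 0"
  shows "(\<forall>\<tau>\<in>upper_half_plane.
           serre_deriv (of_real (k + 6)) (rc_bracket (of_real k) 4 F E4) \<tau>
             = of_real ((k - 4) / 18) * rc_bracket (of_real k) 6 F E6 \<tau>)
       \<and> (\<forall>\<tau>\<in>upper_half_plane.
           serre_deriv (of_real (k + 8)) (rc_bracket (of_real k) 6 F E6) \<tau>
             = of_real ((k - 6) / 8) * E4 \<tau> * rc_bracket (of_real k) 4 F E4 \<tau>)"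
proof (intro conjI ballI)
  fix \<tau> assume \<tau>: "\<tau> \<in> upper_half_plane"
  have ode: "qderiv (qderiv F) \<tau> - (of_real k + 1) / 6 * E2 \<tau> * qderiv F \<tau>
               + of_real k * (of_real k + 1) / 12 * qderiv E2 \<tau> * F \<tau> = 0"
    using assms(3) \<tau> by simp
  note identities =
    serre_bracket_identities_algebra[OF qderiv_E[OF \<tau>] qderiv_qderiv_E[OF \<tau>] ode]
  note bracket_deriv = qderiv_rc_bracket[OF assms(2) _ open_upper_half_plane \<tau>]
  show "serre_deriv (of_real (k + 6)) (rc_bracket (of_real k) 4 F E4) \<tau>
          = of_real ((k - 4) / 18) * rc_bracket (of_real k) 6 F E6 \<tau>"
    using identities(1)
    unfolding serre_deriv_def bracket_deriv[OF holomorphic_on_E(2)] unfolding rc_bracket_def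
    by simp
  show "serre_deriv (of_real (k + 8)) (rc_bracket (of_real k) 6 F E6) \<tau>
          = of_real ((k - 6) / 8) * E4 \<tau> * rc_bracket (of_real k) 4 F E4 \<tau>"
    using identities(2)
    unfolding serre_deriv_def bracket_deriv[OF holomorphic_on_E(3)] unfolding rc_bracket_def
    by (simp add: mult.assoc)
qed

end
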